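(* There exists $c>0$ (depending only on the dimension $d$) such that for every Borel set $E\subset\mathbb{R}^d$ and every $0<\lambda<1$, $$\{x: M\chi_E(x)>\lambda\}\subseteq\big\{x: M\big(\chi_{\{M\chi_E>\lambda\}}\,M\chi_E\big)(x)>c\,\lambda(1-\log\lambda)\big\}.$$
   Context: $M$ denotes the Hardy–Littlewood maximal operator on $\mathbb{R}^d$: $Mf(x)=\sup_{Q\ni x}\frac{1}{|Q|}\int_Q|f(y)|\,dy$, the supremum over all cubes $Q$ containing $x$. *)

theory Defs
  imports "HOL-Analysis.Analysis"
begin

definition cubes :: "'a::euclidean_space set set" where
  "cubes = {cbox a (a + h *\<^sub>R One) | a h. h > 0}"

text \<open>Hardy--Littlewood maximal operator (over cubes containing the point),
  for nonnegative extended-real-valued functions (f plays the role of |f|).\<close>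
definition maximal_op :: "('a::euclidean_space \<Rightarrow> ennreal) \<Rightarrow> 'a \<Rightarrow> ennreal" where
  "maximal_op f x =
     (SUP Q \<in> {Q \<in> cubes. x \<in> Q}. (\<integral>\<^sup>+ y. f y * indicator Q y \<partial>lborel) / emeasure lborel Q)"

end

theory Submission
  imports Defs
begin

(* Fix x with M chi_E(x) > t, a cube Q containing x on which E has density above t,
   and put F = E \<inter> Q.  Call a ball sigma-dense if F fills more than the fraction sigma
   of it.  A Vitali covering by nearly largest dense balls gives the reverse weak-type
   estimate |F| \<le> 6^n sigma |U| for the union U of the sigma-dense balls.  If beta is
   the ratio of the volume of a ball to that of its circumscribed cube, the union of the
   (s / beta)-dense balls lies in {M chi_E > s} and, since |F| \<le> s L^n for L^n = |F| / t,
   in the cube B obtained by enlarging Q by L.  On B the function chi_{M chi_E > t} M chi_E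
   dominates the sum of 2^(k-1) t times the indicators of these unions over the dyadic
   levels s = 2^k t \<le> beta / 2, whose number is of order log (1 / t), while |B| is of
   order |F| / t; averaging over B gives the bound for small t.  For t close to 1 the
   trivial bound M (chi_{M chi_E > t} M chi_E) (x) \<ge> t suffices. *)

section \<open>Dense balls and a reverse weak-type inequality\<close>

definition dense_ball :: "'a::euclidean_space set \<Rightarrow> real \<Rightarrow> 'a \<Rightarrow> real \<Rightarrow> bool" where
  "dense_ball F \<sigma> c r \<longleftrightarrow> 0 < r \<and> \<sigma> * measure lborel (ball c r) < measure lborel (F \<inter> ball c r)"

definition dense_ball_union :: "'a::euclidean_space set \<Rightarrow> real \<Rightarrow> 'a set" where
  "dense_ball_union F \<sigma> = \<Union>{ball c r | c r. dense_ball F \<sigma> c r}"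

lemma mem_dense_ball_union:
  "y \<in> dense_ball_union F \<sigma> \<longleftrightarrow> (\<exists>c r. dense_ball F \<sigma> c r \<and> y \<in> ball c r)"
  unfolding dense_ball_union_def by blast

lemma open_dense_ball_union: "open (dense_ball_union F \<sigma>)"
  by (auto simp: dense_ball_union_def)

lemma sets_dense_ball_union [measurable]: "dense_ball_union F \<sigma> \<in> sets borel"
  by (simp add: borel_open open_dense_ball_union)

lemma measure_lborel_ball:
  fixes c :: "'a::euclidean_space"
  assumes "0 \<le> r"
  shows "measure lborel (ball c r) = unit_ball_vol (real DIM('a)) * r ^ DIM('a)"
  using assms by (simp add: measure_def emeasure_ball)

lemma emeasure_Int_ball_le_if_not_dense:
  fixes F :: "'a::euclidean_space set"
  assumes F: "F \<in> fmeasurable lborel" and r: "0 < r" and \<sigma>: "0 \<le> \<sigma>"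
    and sparse: "\<not> dense_ball F \<sigma> c r"
  shows "emeasure lborel (F \<inter> ball c r) \<le> ennreal \<sigma> * emeasure lborel (ball c r)"
proof -
  have "measure lborel (F \<inter> ball c r) \<le> \<sigma> * measure lborel (ball c r)"
    using sparse r by (auto simp: dense_ball_def)
  moreover have "F \<inter> ball c r \<in> fmeasurable lborel"
    using F by (intro fmeasurable_Int_fmeasurable) auto
  ultimately show ?thesis
    using \<sigma> emeasure_lborel_ball_finite[of c r]
    by (simp add: emeasure_eq_measure2 emeasure_eq_ennreal_measure ennreal_mult[symmetric] ennreal_leI)
qed

lemma emeasure_Diff_dense_ball_union_Int_ball_le:
  fixes F :: "'a::euclidean_space set"
  assumes F: "F \<in> fmeasurable lborel" and r: "0 < r" and \<theta>: "0 \<le> \<theta>"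
  shows "emeasure lborel ((F - dense_ball_union F \<theta>) \<inter> ball c r) \<le> ennreal \<theta> * emeasure lborel (ball c r)"
proof (cases "dense_ball F \<theta> c r")
  case True
  then have "ball c r \<subseteq> dense_ball_union F \<theta>"
    unfolding dense_ball_union_def by blast
  then have "(F - dense_ball_union F \<theta>) \<inter> ball c r = {}"
    by blast
  then show ?thesis
    by simp
next
  case False
  have "emeasure lborel ((F - dense_ball_union F \<theta>) \<inter> ball c r) \<le> emeasure lborel (F \<inter> ball c r)"
    using F by (intro emeasure_mono) auto
  also have "\<dots> \<le> ennreal \<theta> * emeasure lborel (ball c r)"
    using F r \<theta> False by (rule emeasure_Int_ball_le_if_not_dense)
  finally show ?thesis .
qed

lemma emeasure_UN_countable_le:
  fixes X :: "'i \<Rightarrow> 'a::euclidean_space set"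
  assumes sets: "\<And>i. i \<in> I \<Longrightarrow> X i \<in> sets borel" and I: "countable I"
  shows "emeasure lborel (\<Union>(X ` I)) \<le> (\<integral>\<^sup>+i. emeasure lborel (X i) \<partial>count_space I)"
proof -
  have "emeasure lborel (\<Union>(X ` I)) = (\<integral>\<^sup>+y. indicator (\<Union>(X ` I)) y \<partial>lborel)"
    using sets I by (intro nn_integral_indicator[symmetric] sets.countable_UN'') auto
  also have "\<dots> \<le> (\<integral>\<^sup>+y. (\<integral>\<^sup>+i. indicator (X i) y \<partial>count_space I) \<partial>lborel)"
  proof (intro nn_integral_mono)
    fix y
    show "indicator (\<Union>(X ` I)) y \<le> (\<integral>\<^sup>+i. indicator (X i) y \<partial>count_space I)"
    proof (cases "y \<in> \<Union>(X ` I)")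
      case True
      then obtain j where j: "j \<in> I" "y \<in> X j" by auto
      have "(1::ennreal) = (\<integral>\<^sup>+i. indicator {j} i \<partial>count_space I)"
        using j by (simp add: nn_integral_indicator_singleton)
      also have "\<dots> \<le> (\<integral>\<^sup>+i. indicator (X i) y \<partial>count_space I)"
        by (rule nn_integral_mono) (auto simp: indicator_def j)
      finally show ?thesis using True by simp
    qed simp
  qed
  also have "\<dots> = (\<integral>\<^sup>+i. (\<integral>\<^sup>+y. indicator (X i) y \<partial>lborel) \<partial>count_space I)"
    using I sets by (intro nn_integral_count_space_nn_integral) auto
  also have "\<dots> = (\<integral>\<^sup>+i. emeasure lborel (X i) \<partial>count_space I)"
    using sets by (intro nn_integral_cong) simp
  finally show ?thesis .
qed

lemma emeasure_eq_nn_integral_disjoint_cover: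
  fixes T :: "'a::euclidean_space set" and B :: "'i \<Rightarrow> 'a set"
  assumes T: "T \<in> sets borel" and C: "countable C" "disjoint_family_on B C"
    and B: "\<And>i. i \<in> C \<Longrightarrow> B i \<in> sets borel" and N: "negligible (T - (\<Union>i\<in>C. B i))"
  shows "emeasure lborel T = (\<integral>\<^sup>+i. emeasure lborel (T \<inter> B i) \<partial>count_space C)"
proof -
  have UB: "(\<Union>i\<in>C. B i) \<in> sets borel"
    using C(1) B by (intro sets.countable_UN'') auto
  have "T - (\<Union>i\<in>C. B i) \<in> null_sets lebesgue"
    using N negligible_iff_null_sets by blast
  then have "T - (\<Union>i\<in>C. B i) \<in> null_sets lborel"
    using T UB by (simp add: null_sets_completion_iff)
  then have "emeasure lborel ((\<Union>i\<in>C. T \<inter> B i) \<union> (T - (\<Union>i\<in>C. B i))) =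
      emeasure lborel (\<Union>i\<in>C. T \<inter> B i)"
    using C(1) T B by (intro emeasure_Un_null_set sets.countable_UN'') auto
  moreover have "(\<Union>i\<in>C. T \<inter> B i) \<union> (T - (\<Union>i\<in>C. B i)) = T"
    by blast
  ultimately have "emeasure lborel T = emeasure lborel (\<Union>i\<in>C. T \<inter> B i)"
    by simp
  also have "\<dots> = (\<integral>\<^sup>+i. emeasure lborel (T \<inter> B i) \<partial>count_space C)"
  proof (intro emeasure_UN_countable)
    show "disjoint_family_on (\<lambda>i. T \<inter> B i) C"
      using C(2) unfolding disjoint_family_on_def by blast
  qed (use C(1) T B in auto)
  finally show ?thesis .
qed

lemma Vitali_disjoint_balls_in_open:
  fixes T V :: "'a::euclidean_space set"
  assumes V: "open V" "T \<subseteq> V"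
  obtains C :: "('a \<times> real) set" where "countable C"
    "\<And>i. i \<in> C \<Longrightarrow> 0 < snd i \<and> ball (fst i) (snd i) \<subseteq> V"
    "disjoint_family_on (\<lambda>i. ball (fst i) (snd i)) C"
    "negligible (T - (\<Union>i\<in>C. ball (fst i) (snd i)))"
proof -
  define K where "K = {i. 0 < snd i \<and> ball (fst i) (snd i) \<subseteq> V}"
  have cover: "\<exists>i. i \<in> K \<and> x \<in> ball (fst i) (snd i) \<and> snd i < d" if "x \<in> T" "0 < d" for x d
  proof -
    have "x \<in> V" using V(2) that(1) by blast
    then obtain e where e: "0 < e" "ball x e \<subseteq> V"
      by (rule openE[OF V(1)])
    have "ball x (min e (d / 2)) \<subseteq> V"
      by (rule order_trans[OF subset_ball e(2)]) simp
    then show ?thesis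
      using e(1) that(2) unfolding K_def by (intro exI[of _ "(x, min e (d / 2))"]) simp
  qed
  then obtain C where C: "countable C" "C \<subseteq> K"
    "pairwise (\<lambda>i j. disjnt (ball (fst i) (snd i)) (ball (fst j) (snd j))) C"
    "negligible (T - (\<Union>i\<in>C. ball (fst i) (snd i)))"
    using Vitali_covering_theorem_balls[of T K fst snd, OF cover] by blast
  show ?thesis
  proof (rule that)
    show "disjoint_family_on (\<lambda>i. ball (fst i) (snd i)) C"
      using C(3) unfolding disjoint_family_on_def pairwise_def disjnt_def by blast
    show "0 < snd i \<and> ball (fst i) (snd i) \<subseteq> V" if "i \<in> C" for i
      using C(2) that unfolding K_def by blast
  qed (use C in auto)
qed

lemma null_sets_Diff_dense_ball_union:
  fixes F :: "'a::euclidean_space set"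
  assumes F: "F \<in> fmeasurable lborel" and \<theta>: "0 < \<theta>" "\<theta> < 1"
  shows "F - dense_ball_union F \<theta> \<in> null_sets lborel"
proof -
  define T where "T = F - dense_ball_union F \<theta>"
  define \<tau> where "\<tau> = measure lborel T"
  have T: "T \<in> fmeasurable lborel"
    unfolding T_def using F by (intro fmeasurable_Diff) auto
  have "emeasure lborel T = 0"
  proof (rule ccontr)
    assume "emeasure lborel T \<noteq> 0"
    then have \<tau>: "0 < \<tau>"
      using T by (simp add: \<tau>_def emeasure_eq_measure2 zero_less_measure_iff)
    \<comment> \<open>An open V \<supseteq> T with \<theta> |V| < |T|; disjoint balls in V cover T up to a null set
      and meet T in at most the fraction \<theta> of their measure.\<close>
    obtain V where V: "open V" "T \<subseteq> V" "V - T \<in> lmeasurable"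
      "emeasure lebesgue (V - T) < ennreal ((1 / \<theta> - 1) * \<tau>)"
      using sets_lebesgue_outer_open[of T "(1 / \<theta> - 1) * \<tau>"] T \<tau> \<theta> by auto
    define \<delta> where "\<delta> = measure lebesgue (V - T)"
    have VT: "V - T \<in> sets borel"
      using V(1) T by auto
    have eVT: "emeasure lborel (V - T) = ennreal \<delta>"
      using emeasure_eq_measure2[OF V(3)] VT by (simp add: \<delta>_def)
    have "\<delta> < (1 / \<theta> - 1) * \<tau>"
      using V(4) VT eVT by (simp add: ennreal_less_iff \<delta>_def)
    then have small: "\<theta> * (\<tau> + \<delta>) < \<tau>"
      using \<theta> by (simp add: field_simps)
    obtain C where C: "countable C" "\<And>i. i \<in> C \<Longrightarrow> 0 < snd i \<and> ball (fst i) (snd i) \<subseteq> V"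
      "disjoint_family_on (\<lambda>i. ball (fst i) (snd i)) C"
      "negligible (T - (\<Union>i\<in>C. ball (fst i) (snd i)))"
      using Vitali_disjoint_balls_in_open[OF V(1,2)] by blast
    let ?B = "\<lambda>i. ball (fst i) (snd i)"
    have "emeasure lborel T = (\<integral>\<^sup>+i. emeasure lborel (T \<inter> ?B i) \<partial>count_space C)"
      using T C by (intro emeasure_eq_nn_integral_disjoint_cover) auto
    also have "\<dots> \<le> (\<integral>\<^sup>+i. ennreal \<theta> * emeasure lborel (?B i) \<partial>count_space C)"
      unfolding T_def using F C(2) \<theta>
      by (intro nn_integral_mono emeasure_Diff_dense_ball_union_Int_ball_le) auto
    also have "\<dots> = ennreal \<theta> * emeasure lborel (\<Union>i\<in>C. ?B i)"
      using C(1,3) by (simp add: nn_integral_cmult emeasure_UN_countable)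
    also have "\<dots> \<le> ennreal \<theta> * emeasure lborel V"
      using C(2) V(1) by (intro mult_left_mono emeasure_mono) auto
    also have "emeasure lborel V = emeasure lborel T + emeasure lborel (V - T)"
      using V(2) T VT by (subst plus_emeasure) (auto simp: Un_absorb1)
    also have "emeasure lborel T + emeasure lborel (V - T) = ennreal (\<tau> + \<delta>)"
      using T eVT by (simp add: \<tau>_def \<delta>_def emeasure_eq_measure2)
    also have "ennreal \<theta> * ennreal (\<tau> + \<delta>) = ennreal (\<theta> * (\<tau> + \<delta>))"
      using \<theta> by (simp add: \<tau>_def \<delta>_def ennreal_mult)
    also have "\<dots> < ennreal \<tau>"
      using small \<tau> by (intro ennreal_lessI)
    also have "\<dots> = emeasure lborel T"
      using T by (simp add: \<tau>_def emeasure_eq_measure2)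
    finally show False by simp
  qed
  then show ?thesis
    using T unfolding T_def by (auto intro: null_setsI)
qed

lemma dense_ball_radius_le:
  fixes F :: "'a::euclidean_space set"
  assumes F: "F \<in> fmeasurable lborel" and \<sigma>: "0 < \<sigma>" and d: "dense_ball F \<sigma> c r"
  shows "r \<le> max 1 (measure lborel F / (\<sigma> * unit_ball_vol (real DIM('a))))"
proof (cases "r \<le> 1")
  case False
  have r: "0 < r" using d by (simp add: dense_ball_def)
  have "\<sigma> * (unit_ball_vol (real DIM('a)) * r ^ DIM('a)) < measure lborel (F \<inter> ball c r)"
    using d r by (simp add: dense_ball_def measure_lborel_ball)
  also have "\<dots> \<le> measure lborel F"
    using F by (intro measure_mono_fmeasurable) auto
  finally have "\<sigma> * unit_ball_vol (real DIM('a)) * r ^ DIM('a) < measure lborel F"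
    by (simp add: mult.assoc)
  moreover have "r ^ 1 \<le> r ^ DIM('a)"
    using False by (intro power_increasing) (auto simp: DIM_positive Suc_leI)
  then have "\<sigma> * unit_ball_vol (real DIM('a)) * r \<le> \<sigma> * unit_ball_vol (real DIM('a)) * r ^ DIM('a)"
    using \<sigma> by (intro mult_left_mono) auto
  ultimately have "\<sigma> * unit_ball_vol (real DIM('a)) * r < measure lborel F"
    by linarith
  then have "r < measure lborel F / (\<sigma> * unit_ball_vol (real DIM('a)))"
    using \<sigma> by (simp add: field_simps)
  then show ?thesis
    by (simp add: le_max_iff_disj)
qed simp

lemma obtain_nearly_largest_dense_balls:
  fixes F :: "'a::euclidean_space set"
  assumes F: "F \<in> fmeasurable lborel" and \<sigma>: "0 < \<sigma>"
  obtains a \<rho> where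
    "\<And>y. y \<in> dense_ball_union F \<sigma> \<Longrightarrow> dense_ball F \<sigma> (a y) (\<rho> y) \<and> y \<in> ball (a y) (\<rho> y)"
    "\<And>y c r. y \<in> dense_ball_union F \<sigma> \<Longrightarrow> dense_ball F \<sigma> c r \<Longrightarrow> y \<in> ball c r \<Longrightarrow> r < 2 * \<rho> y"
proof -
  have "\<exists>p. dense_ball F \<sigma> (fst p) (snd p) \<and> y \<in> ball (fst p) (snd p) \<and>
      (\<forall>c r. dense_ball F \<sigma> c r \<longrightarrow> y \<in> ball c r \<longrightarrow> r < 2 * snd p)"
    if y: "y \<in> dense_ball_union F \<sigma>" for y
  proof -
    define R where "R = {r. \<exists>c. dense_ball F \<sigma> c r \<and> y \<in> ball c r}"
    obtain r0 where r0: "r0 \<in> R"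
      using y unfolding R_def mem_dense_ball_union by blast
    have bdd: "bdd_above R"
      unfolding R_def by (rule bdd_aboveI) (blast dest: dense_ball_radius_le[OF F \<sigma>])
    have "0 < r0"
      using r0 by (auto simp: R_def dense_ball_def)
    also have "r0 \<le> Sup R"
      using r0 bdd by (rule cSup_upper)
    finally have "Sup R / 2 < Sup R" by simp
    then obtain r where r: "r \<in> R" "Sup R / 2 < r"
      using less_cSupD[of R] r0 by blast
    then obtain c where "dense_ball F \<sigma> c r" "y \<in> ball c r"
      unfolding R_def by blast
    moreover have "r' < 2 * r" if "dense_ball F \<sigma> c' r'" "y \<in> ball c' r'" for c' r'
    proof -
      have "r' \<in> R" using that unfolding R_def by blast
      then have "r' \<le> Sup R" using bdd by (rule cSup_upper)
      then show ?thesis using r(2) by linarith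
    qed
    ultimately show ?thesis
      by (intro exI[of _ "(c, r)"]) auto
  qed
  then obtain p where "\<And>y. y \<in> dense_ball_union F \<sigma> \<Longrightarrow> dense_ball F \<sigma> (fst (p y)) (snd (p y)) \<and>
      y \<in> ball (fst (p y)) (snd (p y)) \<and> (\<forall>c r. dense_ball F \<sigma> c r \<longrightarrow> y \<in> ball c r \<longrightarrow> r < 2 * snd (p y))"
    by metis
  then show ?thesis
    by (intro that[of "\<lambda>y. fst (p y)" "\<lambda>y. snd (p y)"]) auto
qed

lemma emeasure_Int_cball_le_if_not_dense:
  fixes F :: "'a::euclidean_space set"
  assumes F: "F \<in> fmeasurable lborel" and r: "0 < r" and \<sigma>: "0 \<le> \<sigma>"
    and sparse: "\<not> dense_ball F \<sigma> c (6 * r)"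
  shows "emeasure lborel (F \<inter> cball c (5 * r)) \<le> ennreal (6 ^ DIM('a) * \<sigma>) * emeasure lborel (ball c r)"
proof -
  have "emeasure lborel (F \<inter> cball c (5 * r)) \<le> emeasure lborel (F \<inter> ball c (6 * r))"
    using F r by (intro emeasure_mono) (auto simp: subset_iff)
  also have "\<dots> \<le> ennreal \<sigma> * emeasure lborel (ball c (6 * r))"
    using F r \<sigma> sparse by (intro emeasure_Int_ball_le_if_not_dense) auto
  also have "emeasure lborel (ball c (6 * r)) = ennreal (6 ^ DIM('a)) * emeasure lborel (ball c r)"
    using r by (simp add: emeasure_ball ennreal_mult[symmetric] power_mult_distrib mult.left_commute)
  finally show ?thesis
    using \<sigma> by (simp add: ennreal_mult mult.assoc mult.left_commute)
qed

lemma emeasure_le_dense_ball_union: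
  fixes F :: "'a::euclidean_space set"
  assumes F: "F \<in> fmeasurable lborel" and \<sigma>: "0 < \<sigma>" "\<sigma> < 1"
  shows "emeasure lborel F \<le> ennreal (6 ^ DIM('a) * \<sigma>) * emeasure lborel (dense_ball_union F \<sigma>)"
proof -
  let ?U = "dense_ball_union F \<sigma>"
  define G where "G = F \<inter> ?U"
  \<comment> \<open>Through each point of U a dense ball of nearly maximal radius, so that the concentric ball
    of six times that radius is no longer dense.\<close>
  obtain a \<rho> where ball: "\<And>y. y \<in> ?U \<Longrightarrow> dense_ball F \<sigma> (a y) (\<rho> y) \<and> y \<in> ball (a y) (\<rho> y)"
    and largest: "\<And>y c r. y \<in> ?U \<Longrightarrow> dense_ball F \<sigma> c r \<Longrightarrow> y \<in> ball c r \<Longrightarrow> r < 2 * \<rho> y"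
    using obtain_nearly_largest_dense_balls[OF F \<sigma>(1)] by blast
  have \<rho>: "0 < \<rho> y \<and> \<rho> y \<le> max 1 (measure lborel F / (\<sigma> * unit_ball_vol (real DIM('a))))" if "y \<in> G" for y
    using that ball[of y] dense_ball_radius_le[OF F \<sigma>(1)] unfolding G_def dense_ball_def by blast
  have cover: "G \<subseteq> (\<Union>y\<in>G. cball (a y) (\<rho> y))"
    using ball unfolding G_def by (force dest!: ball_subset_cball[THEN subsetD])
  obtain C where C: "countable C" "C \<subseteq> G"
     "pairwise (\<lambda>i j. disjnt (cball (a i) (\<rho> i)) (cball (a j) (\<rho> j))) C"
     "G \<subseteq> (\<Union>i\<in>C. cball (a i) (5 * \<rho> i))"
    using Vitali_covering_lemma_cballs[OF cover \<rho>] by blast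
  have "F - ?U \<in> null_sets lborel"
    using F \<sigma> by (rule null_sets_Diff_dense_ball_union)
  then have "emeasure lborel F = emeasure lborel G"
    using emeasure_Un_null_set[of G lborel "F - ?U"] F unfolding G_def
    by (metis Int_Diff_Un fmeasurableD sets.Int sets_dense_ball_union sets_lborel)
  also have "\<dots> \<le> emeasure lborel (\<Union>i\<in>C. F \<inter> cball (a i) (5 * \<rho> i))"
    using C(1,4) F unfolding G_def by (intro emeasure_mono sets.countable_UN'') auto
  also have "\<dots> \<le> (\<integral>\<^sup>+i. emeasure lborel (F \<inter> cball (a i) (5 * \<rho> i)) \<partial>count_space C)"
    using F C(1) by (intro emeasure_UN_countable_le) auto
  also have "\<dots> \<le> (\<integral>\<^sup>+i. ennreal (6 ^ DIM('a) * \<sigma>) * emeasure lborel (ball (a i) (\<rho> i)) \<partial>count_space C)"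
  proof (intro nn_integral_mono emeasure_Int_cball_le_if_not_dense[OF F])
    fix i assume "i \<in> space (count_space C)"
    then have i: "i \<in> ?U" "0 < \<rho> i"
      using C(2) \<rho> unfolding G_def by auto
    show "\<not> dense_ball F \<sigma> (a i) (6 * \<rho> i)"
      using i largest[of i "a i" "6 * \<rho> i"] ball[of i] by auto
  qed (use \<sigma> C(2) \<rho> in auto)
  also have "\<dots> = ennreal (6 ^ DIM('a) * \<sigma>) * emeasure lborel (\<Union>i\<in>C. ball (a i) (\<rho> i))"
  proof -
    have "disjoint_family_on (\<lambda>i. ball (a i) (\<rho> i)) C"
      using C(3) unfolding disjoint_family_on_def pairwise_def disjnt_def
      by (meson ball_subset_cball disjoint_iff subsetD)
    then show ?thesis
      using C(1) by (simp add: nn_integral_cmult emeasure_UN_countable)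
  qed
  also have "\<dots> \<le> ennreal (6 ^ DIM('a) * \<sigma>) * emeasure lborel ?U"
  proof -
    have "(\<Union>i\<in>C. ball (a i) (\<rho> i)) \<subseteq> ?U"
      using C(2) ball unfolding G_def dense_ball_union_def by blast
    then show ?thesis
      by (intro mult_left_mono emeasure_mono) auto
  qed
  finally show ?thesis .
qed

section \<open>Cubes and the maximal operator\<close>

definition ball_cube_ratio :: "nat \<Rightarrow> real" where
  "ball_cube_ratio n = unit_ball_vol (real n) / 2 ^ n"

lemma ball_cube_ratio_pos: "0 < ball_cube_ratio n"
  by (simp add: ball_cube_ratio_def)

lemma measure_ball_cube_ratio:
  fixes c :: "'a::euclidean_space"
  assumes "0 \<le> r"
  shows "measure lborel (ball c r) = ball_cube_ratio DIM('a) * (2 * r) ^ DIM('a)"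
  using assms by (simp add: measure_lborel_ball ball_cube_ratio_def power_mult_distrib)

lemma emeasure_cube:
  fixes a :: "'a::euclidean_space"
  assumes "0 \<le> h"
  shows "emeasure lborel (cbox a (a + h *\<^sub>R One)) = ennreal (h ^ DIM('a))"
proof -
  have "(\<Prod>b\<in>(Basis::'a set). (a + h *\<^sub>R One - a) \<bullet> b) = (\<Prod>b\<in>(Basis::'a set). h)"
    by (intro prod.cong) auto
  then show ?thesis
    using assms by (simp add: emeasure_lborel_cbox_eq inner_add_left)
qed

lemma ball_subset_cube:
  fixes c :: "'a::euclidean_space"
  shows "ball c r \<subseteq> cbox (c - r *\<^sub>R One) (c - r *\<^sub>R One + (2 * r) *\<^sub>R One)"
proof
  fix y assume y: "y \<in> ball c r"
  show "y \<in> cbox (c - r *\<^sub>R One) (c - r *\<^sub>R One + (2 * r) *\<^sub>R One)"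
    unfolding mem_box
  proof
    fix b :: 'a assume b: "b \<in> Basis"
    have "\<bar>(y - c) \<bullet> b\<bar> \<le> norm (y - c)" using b by (rule Basis_le_norm)
    also have "\<dots> < r" using y by (simp add: dist_norm norm_minus_commute)
    finally show "(c - r *\<^sub>R One) \<bullet> b \<le> y \<bullet> b \<and> y \<bullet> b \<le> (c - r *\<^sub>R One + (2 * r) *\<^sub>R One) \<bullet> b"
      using b by (auto simp: inner_diff_left inner_add_left abs_less_iff)
  qed
qed

lemma ball_cube_ratio_le_1: "ball_cube_ratio DIM('a::euclidean_space) \<le> 1"
proof -
  have "measure lborel (ball (0::'a) 1) \<le> measure lborel (cbox (- One) (- One + 2 *\<^sub>R One) :: 'a set)"
    using ball_subset_cube[of "0::'a" 1] by (intro measure_mono_fmeasurable) auto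
  also have "\<dots> = 2 ^ DIM('a)"
    using emeasure_cube[of 2 "- One :: 'a"] by (simp add: measure_def)
  finally show ?thesis
    by (simp add: measure_ball_cube_ratio)
qed

lemma fmeasurable_Int_cbox: "E \<in> sets borel \<Longrightarrow> E \<inter> cbox a b \<in> fmeasurable lborel"
  using fmeasurable_Int_fmeasurable[OF fmeasurable_cbox, of E] by (simp add: Int_commute)

lemma cube_in_cubes: "0 < h \<Longrightarrow> cbox a (a + h *\<^sub>R One) \<in> cubes"
  unfolding cubes_def by blast

lemma cubesE:
  assumes "Q \<in> cubes"
  obtains a h where "Q = cbox a (a + h *\<^sub>R One)" "0 < h"
  using assms unfolding cubes_def by blast

lemma enlarged_cube:
  fixes q :: "'a::euclidean_space"
  assumes h: "0 < h" and L: "0 < L"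
  defines "B \<equiv> cbox (q - L *\<^sub>R One) (q + h *\<^sub>R One + L *\<^sub>R One)"
  shows "B \<in> cubes" "cbox q (q + h *\<^sub>R One) \<subseteq> B" "emeasure lborel B = ennreal ((h + 2 * L) ^ DIM('a))"
proof -
  have "q + h *\<^sub>R One + L *\<^sub>R One = (q - L *\<^sub>R One) + (h + 2 * L) *\<^sub>R One"
    by (simp add: euclidean_eq_iff[where 'a='a] inner_add_left inner_diff_left)
  then have B: "B = cbox (q - L *\<^sub>R One) ((q - L *\<^sub>R One) + (h + 2 * L) *\<^sub>R One)"
    by (simp only: B_def)
  show "B \<in> cubes" "emeasure lborel B = ennreal ((h + 2 * L) ^ DIM('a))"
    unfolding B using h L by (intro cube_in_cubes emeasure_cube; simp)+
  show "cbox q (q + h *\<^sub>R One) \<subseteq> B"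
    unfolding B_def using h L by (subst subset_box) (auto simp: inner_add_left inner_diff_left)
qed

lemma cube_average_indicator:
  fixes E :: "'a::euclidean_space set" and a :: 'a
  assumes E: "E \<in> sets borel" and h: "0 < h"
  defines "Q \<equiv> cbox a (a + h *\<^sub>R One)"
  shows "(\<integral>\<^sup>+ z. indicator E z * indicator Q z \<partial>lborel) / emeasure lborel Q =
    ennreal (measure lborel (E \<inter> Q) / h ^ DIM('a))"
proof -
  have "(\<integral>\<^sup>+ z. indicator E z * indicator Q z \<partial>lborel) = emeasure lborel (E \<inter> Q)"
    using E by (simp add: Q_def indicator_inter_arith[symmetric])
  also have "\<dots> = ennreal (measure lborel (E \<inter> Q))"
    using E unfolding Q_def by (intro emeasure_eq_measure2 fmeasurable_Int_cbox)
  finally show ?thesis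
    using h by (simp add: Q_def emeasure_cube divide_ennreal)
qed

lemma cube_average_le_maximal_op:
  assumes "Q \<in> cubes" "y \<in> Q"
  shows "(\<integral>\<^sup>+ z. f z * indicator Q z \<partial>lborel) / emeasure lborel Q \<le> maximal_op f y"
  unfolding maximal_op_def using assms by (intro SUP_upper) auto

lemma maximal_op_gtE:
  assumes "a < maximal_op f x"
  obtains Q where "Q \<in> cubes" "x \<in> Q" "a < (\<integral>\<^sup>+ z. f z * indicator Q z \<partial>lborel) / emeasure lborel Q"
  using assms unfolding maximal_op_def by (auto simp: less_SUP_iff)

lemma maximal_op_indicator_gtE:
  fixes E :: "'a::euclidean_space set"
  assumes E: "E \<in> sets borel" and t: "0 \<le> t" and x: "ennreal t < maximal_op (indicator E) x"
  obtains q h where "0 < h" "x \<in> cbox q (q + h *\<^sub>R One)"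
    "t * h ^ DIM('a) < measure lborel (E \<inter> cbox q (q + h *\<^sub>R One))"
proof -
  obtain Q where Q: "Q \<in> cubes" "x \<in> Q"
      "ennreal t < (\<integral>\<^sup>+ z. indicator E z * indicator Q z \<partial>lborel) / emeasure lborel Q"
    using x by (rule maximal_op_gtE)
  obtain q h where Qqh: "Q = cbox q (q + h *\<^sub>R One)" "0 < h"
    using Q(1) by (rule cubesE)
  have "ennreal t < ennreal (measure lborel (E \<inter> Q) / h ^ DIM('a))"
    using Q(3) E Qqh by (simp add: cube_average_indicator)
  then have "t * h ^ DIM('a) < measure lborel (E \<inter> Q)"
    using t Qqh(2) by (subst (asm) ennreal_less_iff) (auto simp: field_simps)
  then show ?thesis
    using Q(2) Qqh by (intro that) auto
qed

lemma maximal_op_ge_if_ge_on_cube: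
  assumes Q: "Q \<in> cubes" "x \<in> Q" and ge: "\<And>y. y \<in> Q \<Longrightarrow> a \<le> f y"
  shows "a \<le> maximal_op f x"
proof -
  obtain q h where qh: "Q = cbox q (q + h *\<^sub>R One)" "0 < h"
    using Q(1) by (rule cubesE)
  have "a * emeasure lborel Q = (\<integral>\<^sup>+ z. a * indicator Q z \<partial>lborel)"
    using qh by (simp add: nn_integral_cmult_indicator)
  also have "\<dots> \<le> (\<integral>\<^sup>+ z. f z * indicator Q z \<partial>lborel)"
    using ge by (intro nn_integral_mono) (simp split: split_indicator)
  finally have "a * emeasure lborel Q / emeasure lborel Q \<le> (\<integral>\<^sup>+ z. f z * indicator Q z \<partial>lborel) / emeasure lborel Q"
    by (rule divide_right_mono_ennreal)
  also have "\<dots> \<le> maximal_op f x"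
    using Q by (rule cube_average_le_maximal_op)
  finally show ?thesis
    using qh by (simp add: emeasure_cube ennreal_mult_divide_eq)
qed

lemma maximal_op_level_ge:
  assumes "a < maximal_op f x"
  shows "a \<le> maximal_op (\<lambda>y. indicator {z. a < maximal_op f z} y * maximal_op f y) x"
proof -
  obtain Q where Q: "Q \<in> cubes" "x \<in> Q" "a < (\<integral>\<^sup>+ z. f z * indicator Q z \<partial>lborel) / emeasure lborel Q"
    using assms by (rule maximal_op_gtE)
  have "a < maximal_op f y" if "y \<in> Q" for y
    using Q(3) cube_average_le_maximal_op[OF Q(1) that] by (rule less_le_trans)
  then have "a \<le> indicator {z. a < maximal_op f z} y * maximal_op f y" if "y \<in> Q" for y
    using that by (simp add: less_imp_le)
  then show ?thesis
    by (rule maximal_op_ge_if_ge_on_cube[OF Q(1,2)])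
qed

section \<open>Dyadic levels of the maximal function\<close>

lemma dense_ball_union_subset_maximal_level:
  fixes E F :: "'a::euclidean_space set"
  assumes E: "E \<in> sets borel" and F: "F \<in> sets borel" "F \<subseteq> E" and \<sigma>: "0 < \<sigma>"
  shows "dense_ball_union F \<sigma> \<subseteq> {y. ennreal (\<sigma> * ball_cube_ratio DIM('a)) < maximal_op (indicator E) y}"
proof
  fix y assume "y \<in> dense_ball_union F \<sigma>"
  then obtain c r where d: "dense_ball F \<sigma> c r" and y: "y \<in> ball c r"
    unfolding mem_dense_ball_union by blast
  have r: "0 < r" using d by (simp add: dense_ball_def)
  define D where "D = cbox (c - r *\<^sub>R One) (c - r *\<^sub>R One + (2 * r) *\<^sub>R One)"
  have D: "D \<in> cubes" "ball c r \<subseteq> D"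
    using r ball_subset_cube[of c r] unfolding D_def by (auto intro: cube_in_cubes)
  have "\<sigma> * ball_cube_ratio DIM('a) * (2 * r) ^ DIM('a) = \<sigma> * measure lborel (ball c r)"
    using r by (simp add: measure_ball_cube_ratio)
  also have "\<dots> < measure lborel (F \<inter> ball c r)"
    using d by (simp add: dense_ball_def)
  also have "\<dots> \<le> measure lborel (E \<inter> D)"
    using F D(2) E unfolding D_def by (intro measure_mono_fmeasurable fmeasurable_Int_cbox) auto
  finally have "ennreal (\<sigma> * ball_cube_ratio DIM('a)) < ennreal (measure lborel (E \<inter> D) / (2 * r) ^ DIM('a))"
    using r \<sigma> ball_cube_ratio_pos[of "DIM('a)"] by (subst ennreal_less_iff) (auto simp: field_simps)
  also have "\<dots> = (\<integral>\<^sup>+ z. indicator E z * indicator D z \<partial>lborel) / emeasure lborel D"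
    using E r unfolding D_def by (intro cube_average_indicator[symmetric]) auto
  also have "\<dots> \<le> maximal_op (indicator E) y"
    using D y by (intro cube_average_le_maximal_op) auto
  finally show "y \<in> {y. ennreal (\<sigma> * ball_cube_ratio DIM('a)) < maximal_op (indicator E) y}"
    by simp
qed

lemma dense_ball_union_subset_box:
  fixes F :: "'a::euclidean_space set"
  assumes F: "F \<in> fmeasurable lborel" "F \<subseteq> cbox a b" and \<sigma>: "0 < \<sigma>" and L: "0 < L"
    and small: "measure lborel F \<le> \<sigma> * ball_cube_ratio DIM('a) * L ^ DIM('a)"
  shows "dense_ball_union F \<sigma> \<subseteq> cbox (a - L *\<^sub>R One) (b + L *\<^sub>R One)"
proof
  fix y assume "y \<in> dense_ball_union F \<sigma>"
  then obtain c r where d: "dense_ball F \<sigma> c r" and y: "y \<in> ball c r"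
    unfolding mem_dense_ball_union by blast
  have r: "0 < r" using d by (simp add: dense_ball_def)
  have "\<sigma> * ball_cube_ratio DIM('a) * (2 * r) ^ DIM('a) = \<sigma> * measure lborel (ball c r)"
    using r by (simp add: measure_ball_cube_ratio)
  also have "\<dots> < measure lborel (F \<inter> ball c r)"
    using d by (simp add: dense_ball_def)
  also have "\<dots> \<le> measure lborel F"
    using F by (intro measure_mono_fmeasurable) auto
  also note small
  finally have "(2 * r) ^ DIM('a) < L ^ DIM('a)"
    using \<sigma> ball_cube_ratio_pos by (simp add: mult_less_cancel_left_pos)
  then have rL: "2 * r < L"
    using L by (rule power_less_imp_less_base[OF _ less_imp_le])
  have "0 \<le> \<sigma> * measure lborel (ball c r)"
    using \<sigma> by simp
  then have "F \<inter> ball c r \<noteq> {}"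
    using d by (auto simp: dense_ball_def)
  then obtain z where z: "z \<in> F" "z \<in> ball c r" by blast
  show "y \<in> cbox (a - L *\<^sub>R One) (b + L *\<^sub>R One)"
    unfolding mem_box
  proof
    fix i :: 'a assume i: "i \<in> Basis"
    have "\<bar>(y - z) \<bullet> i\<bar> \<le> norm (y - z)" using i by (rule Basis_le_norm)
    also have "\<dots> \<le> dist y c + dist c z" by (metis dist_norm dist_triangle)
    also have "\<dots> < L" using y z(2) rL by (simp add: dist_commute)
    finally have "\<bar>(y - z) \<bullet> i\<bar> < L" .
    moreover have "a \<bullet> i \<le> z \<bullet> i" "z \<bullet> i \<le> b \<bullet> i"
      using F(2) z(1) i by (auto simp: mem_box)
    ultimately show "(a - L *\<^sub>R One) \<bullet> i \<le> y \<bullet> i \<and> y \<bullet> i \<le> (b + L *\<^sub>R One) \<bullet> i"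
      using i by (auto simp: inner_diff_left inner_add_left abs_less_iff)
  qed
qed

lemma maximal_level_reverse_weak_type:
  fixes E F :: "'a::euclidean_space set"
  defines "\<beta> \<equiv> ball_cube_ratio DIM('a)"
  assumes E: "E \<in> sets borel" and F: "F \<in> fmeasurable lborel" "F \<subseteq> E" "F \<subseteq> cbox a b"
    and s: "0 < s" "s < \<beta>" and L: "0 < L" "measure lborel F \<le> s * L ^ DIM('a)"
  shows "dense_ball_union F (s / \<beta>) \<subseteq>
      cbox (a - L *\<^sub>R One) (b + L *\<^sub>R One) \<inter> {y. ennreal s < maximal_op (indicator E) y}"
    and "ennreal (\<beta> / 6 ^ DIM('a) * measure lborel F) \<le> ennreal s * emeasure lborel (dense_ball_union F (s / \<beta>))"
proof -
  have \<beta>: "0 < \<beta>"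
    unfolding \<beta>_def by (rule ball_cube_ratio_pos)
  have "dense_ball_union F (s / \<beta>) \<subseteq> cbox (a - L *\<^sub>R One) (b + L *\<^sub>R One)"
    using F s L \<beta> unfolding \<beta>_def by (intro dense_ball_union_subset_box) auto
  moreover have "dense_ball_union F (s / \<beta>) \<subseteq> {y. ennreal (s / \<beta> * \<beta>) < maximal_op (indicator E) y}"
    using E F s \<beta> unfolding \<beta>_def by (intro dense_ball_union_subset_maximal_level) auto
  ultimately show "dense_ball_union F (s / \<beta>) \<subseteq>
      cbox (a - L *\<^sub>R One) (b + L *\<^sub>R One) \<inter> {y. ennreal s < maximal_op (indicator E) y}"
    using \<beta> by simp
  have \<beta>s: "ennreal (\<beta> / 6 ^ DIM('a)) * ennreal (6 ^ DIM('a) * (s / \<beta>)) = ennreal s"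
    using \<beta> s by (simp add: ennreal_mult[symmetric])
  have "ennreal (\<beta> / 6 ^ DIM('a) * measure lborel F) = ennreal (\<beta> / 6 ^ DIM('a)) * emeasure lborel F"
    using F \<beta> by (subst ennreal_mult) (auto simp: emeasure_eq_measure2)
  also have "\<dots> \<le> ennreal (\<beta> / 6 ^ DIM('a)) *
      (ennreal (6 ^ DIM('a) * (s / \<beta>)) * emeasure lborel (dense_ball_union F (s / \<beta>)))"
    using F s \<beta> by (intro mult_left_mono emeasure_le_dense_ball_union) auto
  also have "\<dots> = ennreal s * emeasure lborel (dense_ball_union F (s / \<beta>))"
    by (simp only: mult.assoc[symmetric] \<beta>s)
  finally show "ennreal (\<beta> / 6 ^ DIM('a) * measure lborel F) \<le> ennreal s * emeasure lborel (dense_ball_union F (s / \<beta>))" .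
qed

lemma sum_dyadic_levels_le:
  fixes f :: "'a \<Rightarrow> ennreal"
  assumes t: "0 < t"
  shows "(\<Sum>k\<le>N. ennreal (2 ^ k * t / 2) * indicator {y. ennreal (2 ^ k * t) < f y} x)
    \<le> indicator {y. ennreal t < f y} x * f x"
proof (cases "\<exists>k\<le>N. ennreal (2 ^ k * t) < f x")
  case False
  then show ?thesis by (simp add: indicator_def)
next
  case True
  define K where "K = {k. k \<le> N \<and> ennreal (2 ^ k * t) < f x}"
  define j where "j = Max K"
  have fin: "finite K" unfolding K_def by simp
  have j: "j \<le> N" "ennreal (2 ^ j * t) < f x"
    using Max_in[OF fin] True unfolding j_def K_def by auto
  have above: "k \<le> j" if "k \<le> N" "ennreal (2 ^ k * t) < f x" for k
    using Max_ge[OF fin] that unfolding j_def K_def by auto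
  have "(\<Sum>k\<le>N. ennreal (2 ^ k * t / 2) * indicator {y. ennreal (2 ^ k * t) < f y} x)
      = (\<Sum>k\<le>j. ennreal (2 ^ k * t / 2) * indicator {y. ennreal (2 ^ k * t) < f y} x)"
    using j(1) above by (intro sum.mono_neutral_right) (auto simp: indicator_def not_le)
  also have "\<dots> \<le> (\<Sum>k\<le>j. ennreal (2 ^ k * t / 2))"
    by (intro sum_mono) (simp add: indicator_def)
  also have "\<dots> = ennreal ((\<Sum>k\<le>j. (2::real) ^ k) * t / 2)"
    using t by (simp add: sum_distrib_right sum_divide_distrib)
  also have "(\<Sum>k\<le>j. (2::real) ^ k) = 2 ^ Suc j - 1"
    by (induction j) auto
  also have "ennreal ((2 ^ Suc j - 1) * t / 2) \<le> ennreal (2 ^ j * t)"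
    using t by (intro ennreal_leI) (simp add: field_simps)
  also have "\<dots> < f x"
    by (rule j(2))
  finally have "(\<Sum>k\<le>N. ennreal (2 ^ k * t / 2) * indicator {y. ennreal (2 ^ k * t) < f y} x) \<le> f x"
    by (rule less_imp_le)
  moreover have "t \<le> 2 ^ j * t"
    using t by simp
  then have "ennreal t < f x"
    using j(2) by (meson ennreal_leI le_less_trans)
  ultimately show ?thesis
    by simp
qed

lemma nn_integral_maximal_level_ge_dyadic:
  fixes E F :: "'a::euclidean_space set"
  defines "\<beta> \<equiv> ball_cube_ratio DIM('a)"
  assumes E: "E \<in> sets borel" and F: "F \<in> fmeasurable lborel" "F \<subseteq> E" "F \<subseteq> cbox a b"
    and t: "0 < t" "2 ^ N * t \<le> \<beta> / 2" and L: "0 < L" "measure lborel F \<le> t * L ^ DIM('a)"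
  shows "ennreal (real (N + 1) * \<beta> / (2 * 6 ^ DIM('a)) * measure lborel F) \<le>
    (\<integral>\<^sup>+y. indicator {z. ennreal t < maximal_op (indicator E) z} y * maximal_op (indicator E) y
       * indicator (cbox (a - L *\<^sub>R One) (b + L *\<^sub>R One)) y \<partial>lborel)"
proof -
  let ?M = "maximal_op (indicator E)"
  let ?B = "cbox (a - L *\<^sub>R One) (b + L *\<^sub>R One)"
  define U where "U k = dense_ball_union F (2 ^ k * t / \<beta>)" for k
  have \<beta>: "0 < \<beta>"
    unfolding \<beta>_def by (rule ball_cube_ratio_pos)
  have U: "U k \<subseteq> ?B \<inter> {y. ennreal (2 ^ k * t) < ?M y}"
    and level: "ennreal (\<beta> / 6 ^ DIM('a) * measure lborel F) \<le> ennreal (2 ^ k * t) * emeasure lborel (U k)"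
    if k: "k \<le> N" for k
  proof -
    have "2 ^ k * t \<le> 2 ^ N * t"
      using k t by (intro mult_right_mono power_increasing) auto
    then have "2 ^ k * t < \<beta>"
      using t(2) \<beta> by linarith
    then have s: "0 < 2 ^ k * t" "2 ^ k * t < \<beta>"
      using t(1) by auto
    have "t * L ^ DIM('a) \<le> 2 ^ k * t * L ^ DIM('a)"
      using t L(1) by (intro mult_right_mono) auto
    then have "measure lborel F \<le> 2 ^ k * t * L ^ DIM('a)"
      using L(2) by linarith
    from maximal_level_reverse_weak_type[OF E F s[unfolded \<beta>_def] L(1) this]
    show "U k \<subseteq> ?B \<inter> {y. ennreal (2 ^ k * t) < ?M y}"
      "ennreal (\<beta> / 6 ^ DIM('a) * measure lborel F) \<le> ennreal (2 ^ k * t) * emeasure lborel (U k)"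
      unfolding U_def \<beta>_def by auto
  qed
  have "ennreal (real (N + 1) * \<beta> / (2 * 6 ^ DIM('a)) * measure lborel F) =
      (\<Sum>k\<le>N. ennreal (\<beta> / (2 * 6 ^ DIM('a)) * measure lborel F))"
  proof -
    have "(\<Sum>k\<le>N. \<beta> / (2 * 6 ^ DIM('a)) * measure lborel F) =
        real (N + 1) * \<beta> / (2 * 6 ^ DIM('a)) * measure lborel F"
      by simp
    then show ?thesis
      using \<beta> by (subst sum_ennreal) auto
  qed
  also have "\<dots> \<le> (\<Sum>k\<le>N. ennreal (2 ^ k * t / 2) * emeasure lborel (U k))"
  proof (intro sum_mono)
    fix k assume "k \<in> {..N}"
    have "ennreal (\<beta> / (2 * 6 ^ DIM('a)) * measure lborel F) =
        ennreal (1 / 2) * ennreal (\<beta> / 6 ^ DIM('a) * measure lborel F)"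
      using \<beta> by (subst ennreal_mult[symmetric]) auto
    also have "\<dots> \<le> ennreal (1 / 2) * (ennreal (2 ^ k * t) * emeasure lborel (U k))"
      using level \<open>k \<in> {..N}\<close> by (intro mult_left_mono) auto
    also have "\<dots> = ennreal (2 ^ k * t / 2) * emeasure lborel (U k)"
    proof -
      have "ennreal (1 / 2) * ennreal (2 ^ k * t) = ennreal (2 ^ k * t / 2)"
        using t by (subst ennreal_mult[symmetric]) auto
      then show ?thesis
        by (simp only: mult.assoc[symmetric])
    qed
    finally show "ennreal (\<beta> / (2 * 6 ^ DIM('a)) * measure lborel F) \<le>
        ennreal (2 ^ k * t / 2) * emeasure lborel (U k)" .
  qed
  also have "\<dots> = (\<Sum>k\<le>N. \<integral>\<^sup>+y. ennreal (2 ^ k * t / 2) * indicator (U k) y \<partial>lborel)"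
    by (simp add: nn_integral_cmult_indicator U_def)
  also have "\<dots> = (\<integral>\<^sup>+y. (\<Sum>k\<le>N. ennreal (2 ^ k * t / 2) * indicator (U k) y) \<partial>lborel)"
    unfolding U_def by (intro nn_integral_sum[symmetric]) measurable
  also have "\<dots> \<le> (\<integral>\<^sup>+y. (\<Sum>k\<le>N. ennreal (2 ^ k * t / 2) * indicator {z. ennreal (2 ^ k * t) < ?M z} y)
      * indicator ?B y \<partial>lborel)"
    unfolding sum_distrib_right
    using U by (intro nn_integral_mono sum_mono) (auto simp: indicator_def)
  also have "\<dots> \<le> (\<integral>\<^sup>+y. indicator {z. ennreal t < ?M z} y * ?M y * indicator ?B y \<partial>lborel)"
    using t by (intro nn_integral_mono mult_right_mono sum_dyadic_levels_le) auto
  finally show ?thesis .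
qed

lemma maximal_level_dyadic_lower_bound:
  fixes E :: "'a::euclidean_space set"
  defines "\<beta> \<equiv> ball_cube_ratio DIM('a)"
  assumes E: "E \<in> sets borel" and t: "0 < t" "2 ^ N * t \<le> \<beta> / 2"
    and x: "ennreal t < maximal_op (indicator E) x"
  shows "ennreal (real (N + 1) * t * \<beta> / (2 * 18 ^ DIM('a))) \<le>
    maximal_op (\<lambda>y. indicator {z. ennreal t < maximal_op (indicator E) z} y * maximal_op (indicator E) y) x"
proof -
  let ?g = "\<lambda>y. indicator {z. ennreal t < maximal_op (indicator E) z} y * maximal_op (indicator E) y"
  have \<beta>: "0 < \<beta>"
    unfolding \<beta>_def by (rule ball_cube_ratio_pos)
  obtain q h where h: "0 < h" and xQ: "x \<in> cbox q (q + h *\<^sub>R One)"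
    and tm: "t * h ^ DIM('a) < measure lborel (E \<inter> cbox q (q + h *\<^sub>R One))"
    using maximal_op_indicator_gtE[OF E less_imp_le[OF t(1)] x] by blast
  define F where "F = E \<inter> cbox q (q + h *\<^sub>R One)"
  define m where "m = measure lborel F"
  have F: "F \<in> fmeasurable lborel"
    unfolding F_def using E by (rule fmeasurable_Int_cbox)
  have "0 < t * h ^ DIM('a)"
    using t(1) h by simp
  then have m: "0 < m"
    using tm unfolding m_def F_def by linarith
  define L where "L = root DIM('a) (m / t)"
  have L: "0 < L" "L ^ DIM('a) = m / t"
    using m t by (auto simp: L_def DIM_positive real_root_gt_zero real_root_pow_pos2)
  have "t * h ^ DIM('a) < t * L ^ DIM('a)"
    using tm t L(2) by (simp add: m_def F_def field_simps)
  then have "h ^ DIM('a) < L ^ DIM('a)"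
    using t(1) by simp
  then have hL: "h < L"
    using L(1) by (rule power_less_imp_less_base[OF _ less_imp_le])
  define B where "B = cbox (q - L *\<^sub>R One) (q + h *\<^sub>R One + L *\<^sub>R One)"
  have B: "B \<in> cubes" "x \<in> B" "emeasure lborel B = ennreal ((h + 2 * L) ^ DIM('a))"
    using enlarged_cube[OF h L(1), of q] xQ unfolding B_def by auto
  have "(h + 2 * L) ^ DIM('a) \<le> (3 * L) ^ DIM('a)"
    using hL h by (intro power_mono) auto
  also have "\<dots> = 3 ^ DIM('a) * (m / t)"
    by (simp add: power_mult_distrib L(2))
  finally have B3: "(h + 2 * L) ^ DIM('a) \<le> 3 ^ DIM('a) * (m / t)" .
  have "real (N + 1) * t * \<beta> / (2 * 18 ^ DIM('a)) =
      real (N + 1) * \<beta> / (2 * 6 ^ DIM('a)) * m / (3 ^ DIM('a) * (m / t))"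
    using m t by (simp add: field_simps flip: power_mult_distrib)
  also have "\<dots> \<le> real (N + 1) * \<beta> / (2 * 6 ^ DIM('a)) * m / (h + 2 * L) ^ DIM('a)"
    using B3 m t h L(1) \<beta> by (intro divide_left_mono) auto
  finally have "ennreal (real (N + 1) * t * \<beta> / (2 * 18 ^ DIM('a))) \<le>
      ennreal (real (N + 1) * \<beta> / (2 * 6 ^ DIM('a)) * m) / emeasure lborel B"
    unfolding B(3) using m h L(1) \<beta> by (simp add: divide_ennreal ennreal_leI)
  also have "\<dots> \<le> (\<integral>\<^sup>+y. ?g y * indicator B y \<partial>lborel) / emeasure lborel B"
  proof (rule divide_right_mono_ennreal)
    have "F \<subseteq> E" "F \<subseteq> cbox q (q + h *\<^sub>R One)" "measure lborel F \<le> t * L ^ DIM('a)"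
      using L(2) t unfolding F_def m_def by auto
    then show "ennreal (real (N + 1) * \<beta> / (2 * 6 ^ DIM('a)) * m) \<le> (\<integral>\<^sup>+y. ?g y * indicator B y \<partial>lborel)"
      using nn_integral_maximal_level_ge_dyadic[OF E F _ _ t[unfolded \<beta>_def] L(1)]
      unfolding B_def m_def \<beta>_def by simp
  qed
  also have "\<dots> \<le> maximal_op ?g x"
    using B by (intro cube_average_le_maximal_op) auto
  finally show ?thesis .
qed

lemma exists_dyadic_exponent:
  fixes t s :: real
  assumes t: "0 < t" "t \<le> s"
  obtains N :: nat where "2 ^ N * t \<le> s" "1 - ln t \<le> real (N + 1) * (1 + \<bar>ln s\<bar> + ln 2)"
proof -
  define N where "N = nat \<lfloor>log 2 (s / t)\<rfloor>"
  have st: "1 \<le> s / t"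
    using t by simp
  then have "real N = real_of_int \<lfloor>log 2 (s / t)\<rfloor>"
    by (simp add: N_def)
  then have N: "real N \<le> log 2 (s / t)" "log 2 (s / t) < real N + 1"
    by linarith+
  have "(2::real) ^ N = 2 powr real N"
    by (simp add: powr_realpow)
  also have "\<dots> \<le> 2 powr log 2 (s / t)"
    using N(1) by (intro powr_mono) auto
  also have "\<dots> = s / t"
    using st by simp
  finally have "2 ^ N * t \<le> s"
    using t by (simp add: field_simps)
  moreover have "1 - ln t \<le> real (N + 1) * (1 + \<bar>ln s\<bar> + ln 2)"
  proof -
    have "ln s - ln t = log 2 (s / t) * ln 2"
      using t by (simp add: log_def ln_div)
    also have "\<dots> \<le> (real N + 1) * ln 2"
      using N(2) by (intro mult_right_mono) auto
    finally have "1 - ln t \<le> 1 + \<bar>ln s\<bar> + (real N + 1) * ln 2"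
      by linarith
    also have "\<dots> \<le> real (N + 1) * (1 + \<bar>ln s\<bar> + ln 2)"
      by (simp add: algebra_simps)
    finally show ?thesis .
  qed
  ultimately show ?thesis
    by (rule that)
qed

lemma maximal_level_log_lower_bound:
  fixes E :: "'a::euclidean_space set"
  defines "\<beta> \<equiv> ball_cube_ratio DIM('a)"
  defines "c \<equiv> \<beta> / (2 * 18 ^ DIM('a) * (1 + \<bar>ln (\<beta> / 2)\<bar> + ln 2))"
  assumes E: "E \<in> sets borel" and t: "0 < t" "t < 1"
    and x: "ennreal t < maximal_op (indicator E) x"
  shows "ennreal (c * t * (1 - ln t)) \<le>
    maximal_op (\<lambda>y. indicator {z. ennreal t < maximal_op (indicator E) z} y * maximal_op (indicator E) y) x"
proof -
  define D where "D = 1 + \<bar>ln (\<beta> / 2)\<bar> + ln 2"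
  have \<beta>: "0 < \<beta>" "\<beta> \<le> 1"
    unfolding \<beta>_def by (rule ball_cube_ratio_pos, rule ball_cube_ratio_le_1)
  have D: "0 < D"
    unfolding D_def by (simp add: add_pos_nonneg)
  have cD: "c * D = \<beta> / (2 * 18 ^ DIM('a))"
    using D unfolding c_def D_def[symmetric] by simp
  have c: "0 < c"
    using \<beta> D unfolding c_def D_def[symmetric] by simp
  show ?thesis
  proof (cases "t \<le> \<beta> / 2")
    case True
    then obtain N where N: "2 ^ N * t \<le> \<beta> / 2" "1 - ln t \<le> real (N + 1) * D"
      using exists_dyadic_exponent[OF t(1)] unfolding D_def by blast
    have "c * t * (1 - ln t) \<le> c * t * (real (N + 1) * D)"
      using N(2) c t by (intro mult_left_mono) auto
    also have "\<dots> = (c * D) * (real (N + 1) * t)"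
      by (simp only: ac_simps)
    also have "\<dots> = real (N + 1) * t * \<beta> / (2 * 18 ^ DIM('a))"
      by (simp add: cD)
    finally have "ennreal (c * t * (1 - ln t)) \<le> ennreal (real (N + 1) * t * \<beta> / (2 * 18 ^ DIM('a)))"
      by (rule ennreal_leI)
    also have "\<dots> \<le> maximal_op (\<lambda>y. indicator {z. ennreal t < maximal_op (indicator E) z} y * maximal_op (indicator E) y) x"
      using maximal_level_dyadic_lower_bound[OF E t(1) N(1)[unfolded \<beta>_def] x] unfolding \<beta>_def .
    finally show ?thesis .
  next
    case False
    then have "ln (\<beta> / 2) < ln t"
      using \<beta> t by simp
    then have "1 - ln t \<le> D"
      unfolding D_def using ln_gt_zero[of 2] by linarith
    then have "c * t * (1 - ln t) \<le> c * t * D"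
      using c t by (intro mult_left_mono) auto
    also have "\<dots> \<le> t"
    proof -
      have "\<beta> \<le> 2 * 18 ^ DIM('a)"
        using \<beta>(2) one_le_power[of "18::real" "DIM('a)"] by linarith
      then have "c * D \<le> 1"
        unfolding cD by (simp add: pos_divide_le_eq)
      then show ?thesis
        using t mult_right_mono[of "c * D" 1 t] by (simp add: ac_simps)
    qed
    finally have "ennreal (c * t * (1 - ln t)) \<le> ennreal t"
      by (rule ennreal_leI)
    also have "\<dots> \<le> maximal_op (\<lambda>y. indicator {z. ennreal t < maximal_op (indicator E) z} y * maximal_op (indicator E) y) x"
      using x by (rule maximal_op_level_ge)
    finally show ?thesis .
  qed
qed

theorem corollary2p3:
  shows "\<exists>c::real. c > 0 \<and>
    (\<forall>(E::'a::euclidean_space set) (t::real). E \<in> sets borel \<longrightarrow> 0 < t \<longrightarrow> t < 1 \<longrightarrow>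
      {x. maximal_op (indicator E) x > ennreal t} \<subseteq>
      {x. maximal_op (\<lambda>y. indicator {z. maximal_op (indicator E) z > ennreal t} y
                            * maximal_op (indicator E) y) x
            > ennreal (c * t * (1 - ln t))})"
proof -
  define \<beta> where "\<beta> = ball_cube_ratio DIM('a)"
  define c where "c = \<beta> / (2 * 18 ^ DIM('a) * (1 + \<bar>ln (\<beta> / 2)\<bar> + ln 2))"
  have c: "0 < c"
    unfolding c_def \<beta>_def using ball_cube_ratio_pos by (simp add: add_pos_nonneg)
  show ?thesis
  proof (intro exI[of _ "c / 2"] conjI allI impI subsetI)
    show "0 < c / 2"
      using c by simp
    fix E :: "'a set" and t :: real and x
    assume E: "E \<in> sets borel" and t: "0 < t" "t < 1"
      and "x \<in> {x. maximal_op (indicator E) x > ennreal t}"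
    then have x: "ennreal t < maximal_op (indicator E) x"
      by simp
    have "0 < 1 - ln t"
      using ln_less_zero[OF t] by linarith
    then have "0 < c * t * (1 - ln t)"
      using c t by simp
    then have "ennreal (c / 2 * t * (1 - ln t)) < ennreal (c * t * (1 - ln t))"
      by (intro ennreal_lessI) auto
    also have "\<dots> \<le> maximal_op (\<lambda>y. indicator {z. ennreal t < maximal_op (indicator E) z} y
        * maximal_op (indicator E) y) x"
      unfolding c_def \<beta>_def using E t x by (rule maximal_level_log_lower_bound)
    finally show "x \<in> {x. maximal_op (\<lambda>y. indicator {z. maximal_op (indicator E) z > ennreal t} y
        * maximal_op (indicator E) y) x > ennreal (c / 2 * t * (1 - ln t))}"
      by simp
  qed
qed

end
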